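(* Let $M\subset\mathcal P(\Omega_1)$, $N\subset\mathcal P(\Omega_2)$ be submanifolds, $\varphi:M\to N$ and $\psi:N\to M$ Markov maps with $\psi\circ\varphi=\mathrm{id}_M$, and $p\in M$, $q\in N$ with $q=\varphi(p)$, $p=\psi(q)$. Then the Fisher metrics satisfy $$g_{M,p}(X_p,\psi_{*,q}Y_q)=g_{N,q}(\varphi_{*,p}X_p,Y_q)\quad\forall X_p\in T_p(M),\ Y_q\in T_q(N),$$ i.e. $\psi_{*,q}=(\varphi_{*,p})^\dagger$ (adjoint with respect to $g_{M,p}$ and $g_{N,q}$). Equivalently, for the Fisher co-metrics, $g_{M,p}(\alpha_p,\varphi^*_p\beta_q)=g_{N,q}(\psi^*_q\alpha_p,\beta_q)$ for all $\alpha_p\in T^*_p(M)$, $\beta_q\in T_q^*(N)$. Moreover $(\psi_{*,q})^\dagger\circ\psi_{*,q}=\varphi_{*,p}\circ\psi_{*,q}$ is the orthogonal projector of $T_q(N)$ onto $\varphi_{*,p}(T_p(M))$.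
   Context: $\mathcal P(\Omega)$ is the manifold of strictly positive probability distributions on a finite set $\Omega$. A Markov map $\mathcal P(\Omega_1)\to\mathcal P(\Omega_2)$ is a map $p\mapsto\sum_xW(\cdot|x)p(x)$ for a channel $W$ with $\forall y\,\exists x\,W(y|x)>0$; a Markov map $M\to N$ between submanifolds is the restriction to $M$ of such a map. $\varphi_{*,p}$ is the differential at $p$, $\varphi^*_p$ its transpose. The Fisher metric on $\mathcal P(\Omega)$ is $g_p(X,Y)=\sum_\omega X^{(m)}(\omega)Y^{(m)}(\omega)/p(\omega)$ with $X^{(m)}$ the m-representation (identification of $T_p(\mathcal P(\Omega))$ with $\{B:\sum B=0\}$); $g_M,g_N$ are its restrictions, and the same symbols denote the dual inner products on cotangent spaces (Fisher co-metrics). *)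

theory Defs
  imports "HOL-Analysis.Analysis"
begin

definition prob_simplex :: "(real^'a::finite) set" where
  "prob_simplex = {p. (\<forall>x. 0 < p$x) \<and> (\<Sum>x\<in>UNIV. p$x) = 1}"

text \<open>A channel W(y|x), written W y x, with every output reachable.\<close>
definition is_channel :: "('b::finite \<Rightarrow> 'a::finite \<Rightarrow> real) \<Rightarrow> bool" where
  "is_channel W \<longleftrightarrow> (\<forall>x y. 0 \<le> W y x) \<and> (\<forall>x. (\<Sum>y\<in>UNIV. W y x) = 1) \<and> (\<forall>y. \<exists>x. 0 < W y x)"

text \<open>The (linear) map p |-> sum_x W(.|x) p(x); on P(Omega) it is the Markov map, and on
  tangent vectors (m-representation) it is its differential.\<close>
definition markov_map :: "('b::finite \<Rightarrow> 'a::finite \<Rightarrow> real) \<Rightarrow> real^'a \<Rightarrow> real^'b" where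
  "markov_map W p = (\<chi> y. \<Sum>x\<in>UNIV. W y x * p$x)"

text \<open>C-infinity real functions on an open set: differentiable, with all partial derivatives
  again C-infinity (greatest fixed point).\<close>
coinductive smooth_on :: "(real^'n::finite) set \<Rightarrow> (real^'n \<Rightarrow> real) \<Rightarrow> bool" for U where
  "(\<forall>x\<in>U. f differentiable (at x)) \<Longrightarrow>
   (\<forall>i. smooth_on U (\<lambda>x. frechet_derivative f (at x) (axis i 1))) \<Longrightarrow> smooth_on U f"

definition submanifold :: "(real^'n::finite) set \<Rightarrow> bool" where
  "submanifold S \<longleftrightarrow> (\<forall>p\<in>S. \<exists>U k (F :: nat \<Rightarrow> real^'n \<Rightarrow> real).
      open U \<and> p \<in> U \<and> (\<forall>i<k. smooth_on U (F i)) \<and>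
      (\<forall>x\<in>S \<inter> U. \<forall>c :: nat \<Rightarrow> real. \<exists>v. \<forall>i<k. frechet_derivative (F i) (at x) v = c i) \<and>
      S \<inter> U = {x\<in>U. \<forall>i<k. F i x = 0})"

definition tangent_space :: "(real^'n::finite) set \<Rightarrow> real^'n \<Rightarrow> (real^'n) set" where
  "tangent_space S p = {v. \<exists>(\<gamma> :: real \<Rightarrow> real^'n) e. 0 < e \<and> \<gamma> 0 = p \<and>
      (\<forall>t. \<bar>t\<bar> < e \<longrightarrow> \<gamma> t \<in> S) \<and> (\<gamma> has_vector_derivative v) (at 0)}"

definition fisher :: "real^'n::finite \<Rightarrow> real^'n \<Rightarrow> real^'n \<Rightarrow> real" where
  "fisher p X Y = (\<Sum>w\<in>UNIV. X$w * Y$w / p$w)"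

definition cotangent :: "(real^'n::finite) set \<Rightarrow> (real^'n \<Rightarrow> real) set" where
  "cotangent T = {\<alpha>. (\<forall>X\<in>T. \<forall>Y\<in>T. \<alpha> (X + Y) = \<alpha> X + \<alpha> Y) \<and>
      (\<forall>c. \<forall>X\<in>T. \<alpha> (c *\<^sub>R X) = c * \<alpha> X) \<and> (\<forall>X. X \<notin> T \<longrightarrow> \<alpha> X = 0)}"

definition pullback :: "(real^'n::finite \<Rightarrow> real^'m::finite) \<Rightarrow> (real^'n) set \<Rightarrow> (real^'m \<Rightarrow> real) \<Rightarrow> real^'n \<Rightarrow> real" where
  "pullback L T \<beta> = (\<lambda>X. if X \<in> T then \<beta> (L X) else 0)"

definition riesz :: "real^'n::finite \<Rightarrow> (real^'n) set \<Rightarrow> (real^'n \<Rightarrow> real) \<Rightarrow> real^'n" where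
  "riesz p T \<alpha> = (THE v. v \<in> T \<and> (\<forall>X\<in>T. fisher p v X = \<alpha> X))"

definition fisher_co :: "real^'n::finite \<Rightarrow> (real^'n) set \<Rightarrow> (real^'n \<Rightarrow> real) \<Rightarrow> (real^'n \<Rightarrow> real) \<Rightarrow> real" where
  "fisher_co p T \<alpha> \<beta> = fisher p (riesz p T \<alpha>) (riesz p T \<beta>)"

end

theory Submission
  imports Defs
begin

text \<open>The Fisher metric is monotone under Markov maps, with the explicit defect
  \<open>\<Sum>x y. V(x|y) q(y) (Z(y)/q(y) - X(x)/p(x))\<^sup>2\<close> where \<open>X = V Z\<close>. Along the round trip
  \<open>X \<mapsto> \<phi>\<^sub>* X \<mapsto> \<psi>\<^sub>* \<phi>\<^sub>* X = X\<close> both inequalities must be equalities, so the likelihood ratio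
  of \<open>\<phi>\<^sub>* X\<close> at \<open>y\<close> agrees with that of \<open>X\<close> at \<open>x\<close> whenever \<open>V(x|y) > 0\<close>; summing
  against \<open>Y\<close> this is exactly \<open>g\<^sub>q(\<phi>\<^sub>* X, Y) = g\<^sub>p(X, \<psi>\<^sub>* Y)\<close>. The tangent spaces of
  submanifolds are linear subspaces (inverse function theorem), so the statement for the
  co-metrics follows by Riesz representation, and since \<open>\<psi>\<^sub>*\<close> is an adjoint left inverse of
  \<open>\<phi>\<^sub>*\<close>, \<open>\<phi>\<^sub>* \<psi>\<^sub>*\<close> is the orthogonal projector onto the image of \<open>\<phi>\<^sub>*\<close>.\<close>

section \<open>Data processing for the Fisher metric\<close>

lemma markov_map_nth [simp]: "markov_map W p $ y = (\<Sum>x\<in>UNIV. W y x * p$x)"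
  by (simp add: markov_map_def)

lemma linear_markov_map: "linear (markov_map W)"
  by (rule linearI) (simp_all add: vec_eq_iff sum.distrib algebra_simps sum_distrib_left)

lemma bounded_linear_markov_map: "bounded_linear (markov_map W)"
  using linear_markov_map linear_conv_bounded_linear by blast

lemma fisher_commute: "fisher p X Y = fisher p Y X"
  unfolding fisher_def by (simp add: mult.commute)

lemma fisher_diff_left: "fisher p (X - Z) Y = fisher p X Y - fisher p Z Y"
  unfolding fisher_def by (simp add: sum_subtractf[symmetric] diff_divide_distrib left_diff_distrib)

lemma fisher_markov_map_defect:
  fixes V :: "'a::finite \<Rightarrow> 'b::finite \<Rightarrow> real"
  assumes V: "is_channel V" and q: "\<forall>y. 0 < q$y" and p: "\<forall>x. 0 < p$x"
    and p_eq: "p = markov_map V q"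
  shows "fisher q Z Z - fisher p (markov_map V Z) (markov_map V Z)
       = (\<Sum>x\<in>UNIV. \<Sum>y\<in>UNIV. V x y * q$y * (Z$y / q$y - markov_map V Z $ x / p$x)^2)"
proof -
  define X where "X = markov_map V Z"
  have VZ: "(\<Sum>y\<in>UNIV. V x y * Z$y) = X$x" for x
    unfolding X_def by simp
  have Vq: "(\<Sum>y\<in>UNIV. V x y * q$y) = p$x" for x
    using p_eq by simp
  have column_sum: "(\<Sum>x\<in>UNIV. V x y) = 1" for y
    using V unfolding is_channel_def by blast
  have expand: "V x y * q$y * (Z$y/q$y - X$x/p$x)^2
      = V x y * ((Z$y)^2/q$y) - 2 * (V x y * Z$y) * (X$x/p$x) + (V x y * q$y) * ((X$x)^2/(p$x)^2)"
    for x y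
    using p[rule_format, of x] q[rule_format, of y] by (simp add: power2_eq_square field_simps)
  have "(\<Sum>x\<in>UNIV. \<Sum>y\<in>UNIV. V x y * q$y * (Z$y/q$y - X$x/p$x)^2)
      = (\<Sum>x\<in>UNIV. \<Sum>y\<in>UNIV. V x y * ((Z$y)^2/q$y))
      - 2 * (\<Sum>x\<in>UNIV. (\<Sum>y\<in>UNIV. V x y * Z$y) * (X$x/p$x))
      + (\<Sum>x\<in>UNIV. (\<Sum>y\<in>UNIV. V x y * q$y) * ((X$x)^2/(p$x)^2))"
    unfolding expand
    by (simp add: sum.distrib sum_subtractf sum_distrib_left sum_distrib_right mult.assoc
        sum_divide_distrib)
  also have "(\<Sum>x\<in>UNIV. \<Sum>y\<in>UNIV. V x y * ((Z$y)^2/q$y)) = fisher q Z Z"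
    unfolding fisher_def
    by (subst sum.swap)
      (simp add: sum_divide_distrib[symmetric] sum_distrib_right[symmetric] column_sum power2_eq_square)
  also have "(\<Sum>x\<in>UNIV. (\<Sum>y\<in>UNIV. V x y * Z$y) * (X$x/p$x)) = fisher p X X"
    unfolding fisher_def VZ by simp
  also have "(\<Sum>x\<in>UNIV. (\<Sum>y\<in>UNIV. V x y * q$y) * ((X$x)^2/(p$x)^2)) = fisher p X X"
    unfolding fisher_def Vq using p by (intro sum.cong) (auto simp: power2_eq_square)
  finally show ?thesis unfolding X_def by simp
qed

lemma fisher_markov_map_monotone:
  fixes V :: "'a::finite \<Rightarrow> 'b::finite \<Rightarrow> real"
  assumes "is_channel V" "\<forall>y. 0 < q$y" "\<forall>x. 0 < p$x" "p = markov_map V q"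
  shows "fisher p (markov_map V Z) (markov_map V Z) \<le> fisher q Z Z"
proof -
  have "0 \<le> V x y" for x y
    using assms(1) unfolding is_channel_def by blast
  then have "0 \<le> (\<Sum>x\<in>UNIV. \<Sum>y\<in>UNIV. V x y * q$y * (Z$y / q$y - markov_map V Z $ x / p$x)^2)"
    using assms(2) by (intro sum_nonneg mult_nonneg_nonneg) (auto intro: less_imp_le)
  then show ?thesis
    using fisher_markov_map_defect[OF assms, of Z] by linarith
qed

lemma fisher_adjoint_markov_maps:
  fixes W :: "'b::finite \<Rightarrow> 'a::finite \<Rightarrow> real" and V :: "'a \<Rightarrow> 'b \<Rightarrow> real"
  assumes p: "\<forall>x. 0 < p$x" and q: "\<forall>y. 0 < q$y"
    and W: "is_channel W" and V: "is_channel V"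
    and q_eq: "q = markov_map W p" and p_eq: "p = markov_map V q"
    and retract: "markov_map V (markov_map W X) = X"
  shows "fisher p X (markov_map V Y) = fisher q (markov_map W X) Y"
proof -
  define Z where "Z = markov_map W X"
  have "fisher q Z Z \<le> fisher p X X"
    unfolding Z_def by (rule fisher_markov_map_monotone[OF W p q q_eq])
  then have "(\<Sum>x\<in>UNIV. \<Sum>y\<in>UNIV. V x y * q$y * (Z$y / q$y - X$x / p$x)^2) \<le> 0"
    using fisher_markov_map_defect[OF V q p p_eq, of Z] retract unfolding Z_def by simp
  moreover have nonneg: "0 \<le> V x y * q$y * (Z$y / q$y - X$x / p$x)^2" for x y
    using V q unfolding is_channel_def by (meson less_imp_le mult_nonneg_nonneg zero_le_power2)
  ultimately have "(\<Sum>x\<in>UNIV. \<Sum>y\<in>UNIV. V x y * q$y * (Z$y / q$y - X$x / p$x)^2) = 0"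
    by (meson antisym sum_nonneg)
  then have zero: "V x y * q$y * (Z$y / q$y - X$x / p$x)^2 = 0" for x y
    by (simp add: sum_nonneg_eq_0_iff sum_nonneg nonneg)
  have ratio: "V x y * (Z$y * Y$y / q$y) = V x y * (X$x * Y$y / p$x)" for x y
    using zero[of x y] p[rule_format, of x] q[rule_format, of y] by (auto simp: field_simps)
  have column_sum: "(\<Sum>x\<in>UNIV. V x y) = 1" for y
    using V unfolding is_channel_def by blast
  have "fisher q Z Y = (\<Sum>y\<in>UNIV. \<Sum>x\<in>UNIV. V x y * (Z$y * Y$y / q$y))"
    unfolding fisher_def
    by (simp add: sum_divide_distrib[symmetric] sum_distrib_right[symmetric] column_sum)
  also have "\<dots> = (\<Sum>y\<in>UNIV. \<Sum>x\<in>UNIV. V x y * (X$x * Y$y / p$x))"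
    by (intro sum.cong refl) (rule ratio)
  also have "\<dots> = fisher p X (markov_map V Y)"
    unfolding fisher_def by (subst sum.swap) (simp add: sum_distrib_left sum_divide_distrib mult_ac)
  finally show ?thesis unfolding Z_def by simp
qed

section \<open>Tangent spaces of submanifolds\<close>

lemma tangent_space_linear_image:
  assumes "bounded_linear L" "L ` M \<subseteq> N" "X \<in> tangent_space M p"
  shows "L X \<in> tangent_space N (L p)"
proof -
  obtain \<gamma> e where \<gamma>: "0 < e" "\<gamma> 0 = p" "\<forall>t. \<bar>t\<bar> < e \<longrightarrow> \<gamma> t \<in> M"
    "(\<gamma> has_vector_derivative X) (at 0)"
    using assms(3) unfolding tangent_space_def by blast
  have "((\<lambda>t. L (\<gamma> t)) has_vector_derivative L X) (at 0)"
    using bounded_linear.has_vector_derivative[OF assms(1) \<gamma>(4)] .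
  moreover have "L (\<gamma> t) \<in> N" if "\<bar>t\<bar> < e" for t
    using \<gamma>(3) that assms(2) by blast
  ultimately show ?thesis
    unfolding tangent_space_def using \<gamma>(1,2)
    by (intro CollectI exI[of _ "\<lambda>t. L (\<gamma> t)"] exI[of _ e]) auto
qed

lemma tangent_space_fixed_by_linear:
  assumes "bounded_linear L" "\<forall>x\<in>M. L x = x" "X \<in> tangent_space M p"
  shows "L X = X"
proof -
  obtain \<gamma> e where \<gamma>: "0 < e" "\<gamma> 0 = p" "\<forall>t. \<bar>t\<bar> < e \<longrightarrow> \<gamma> t \<in> M"
    "(\<gamma> has_vector_derivative X) (at 0)"
    using assms(3) unfolding tangent_space_def by blast
  have "((\<lambda>t. L (\<gamma> t)) has_vector_derivative L X) (at 0)"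
    using bounded_linear.has_vector_derivative[OF assms(1) \<gamma>(4)] .
  moreover have "((\<lambda>t. L (\<gamma> t)) has_vector_derivative X) (at 0)"
    by (rule has_vector_derivative_transform_within_open[OF \<gamma>(4), of "ball 0 e"])
      (use \<gamma> assms(2) in auto)
  ultimately show ?thesis
    using vector_derivative_unique_at by blast
qed

lemma smooth_on_differentiable: "smooth_on U f \<Longrightarrow> x \<in> U \<Longrightarrow> f differentiable (at x)"
  by (erule smooth_on.cases) auto

lemma smooth_on_partial_derivative:
  "smooth_on U f \<Longrightarrow> smooth_on U (\<lambda>x. frechet_derivative f (at x) (axis j 1))"
  by (erule smooth_on.cases) auto

lemma smooth_on_continuous_on: "smooth_on U f \<Longrightarrow> continuous_on U f"
  by (metis continuous_at_imp_continuous_on differentiable_imp_continuous_within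
      smooth_on_differentiable)

lemma smooth_on_has_derivative:
  "smooth_on U f \<Longrightarrow> x \<in> U \<Longrightarrow> (f has_derivative frechet_derivative f (at x)) (at x)"
  using frechet_derivative_works smooth_on_differentiable by blast

lemma tangent_space_subset_kernel:
  fixes F :: "real^'n::finite \<Rightarrow> real"
  assumes "open U" "p \<in> U" "\<forall>x\<in>S \<inter> U. F x = 0" "F differentiable (at p)"
    and "v \<in> tangent_space S p"
  shows "frechet_derivative F (at p) v = 0"
proof -
  obtain \<gamma> e where \<gamma>: "0 < e" "\<gamma> 0 = p" "\<forall>t. \<bar>t\<bar> < e \<longrightarrow> \<gamma> t \<in> S"
    "(\<gamma> has_vector_derivative v) (at 0)"
    using assms(5) unfolding tangent_space_def by blast
  have "(\<gamma> \<longlongrightarrow> p) (at 0)"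
    using has_vector_derivative_continuous[OF \<gamma>(4)] \<gamma>(2) by (simp add: continuous_at)
  then have "\<forall>\<^sub>F t in at 0. \<gamma> t \<in> U"
    using topological_tendstoD assms(1,2) by blast
  moreover have "\<forall>\<^sub>F t in at (0::real). \<bar>t\<bar> < e"
    unfolding eventually_at using \<gamma>(1) by (intro exI[of _ e]) auto
  ultimately have "\<forall>\<^sub>F t in at 0. 0 = F (\<gamma> t)"
    by eventually_elim (use \<gamma> assms(3) in auto)
  then have "((F \<circ> \<gamma>) has_derivative (\<lambda>t. 0)) (at 0)"
    unfolding comp_def
    by (rule has_derivative_transform_eventually[OF has_derivative_const])
      (use \<gamma> assms in auto)
  moreover have "((F \<circ> \<gamma>) has_derivative (\<lambda>t. frechet_derivative F (at p) (t *\<^sub>R v))) (at 0)"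
    using diff_chain_at[OF \<gamma>(4)[unfolded has_vector_derivative_def]]
      assms(4) \<gamma>(2) frechet_derivative_works by (auto simp: comp_def)
  ultimately show ?thesis
    using has_derivative_unique by (metis scaleR_one)
qed

lemma local_right_inverse:
  fixes \<Phi> :: "'a::euclidean_space \<Rightarrow> 'a"
  assumes "open U" "p \<in> U"
    and "\<And>x. x \<in> U \<Longrightarrow> (\<Phi> has_derivative blinfun_apply (f' x)) (at x)"
    and "continuous_on U f'" "f' p = id_blinfun"
  obtains V g where "open V" "\<Phi> p \<in> V" "\<forall>y\<in>V. g y \<in> U \<and> \<Phi> (g y) = y"
    "g (\<Phi> p) = p" "(g has_derivative id) (at (\<Phi> p))"
proof -
  obtain U' V g g' where IFT: "open U'" "U' \<subseteq> U" "p \<in> U'" "open V" "\<Phi> p \<in> V"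
      "homeomorphism U' V \<Phi> g"
      "\<And>y. y \<in> V \<Longrightarrow> (g has_derivative (g' y)) (at y)"
      "\<And>y. y \<in> V \<Longrightarrow> g' y = inv (blinfun_apply (f' (g y)))"
    by (rule inverse_function_theorem[OF assms(1,3,4,2), of id_blinfun])
      (auto simp: assms(5) intro!: blinfun_eqI)
  have g_\<Phi>p: "g (\<Phi> p) = p"
    using IFT(3,6) unfolding homeomorphism_def by auto
  have "g' (\<Phi> p) = id"
    using IFT(5,8) g_\<Phi>p assms(5) by (simp add: id_def[symmetric])
  then show ?thesis
    using that[of V g] IFT g_\<Phi>p unfolding homeomorphism_def by fastforce
qed

lemma straightening_map_derivative:
  fixes F :: "nat \<Rightarrow> real^'n::finite \<Rightarrow> real" and w :: "nat \<Rightarrow> real^'n"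
  assumes U: "open U" "p \<in> U" and smooth: "\<forall>i<k. smooth_on U (F i)"
  defines "\<Phi> \<equiv> \<lambda>x. (x - p) + (\<Sum>i<k. (F i x - frechet_derivative (F i) (at p) (x - p)) *\<^sub>R w i)"
  obtains f' where "\<And>x. x \<in> U \<Longrightarrow> (\<Phi> has_derivative blinfun_apply (f' x)) (at x)"
    "continuous_on U f'" "f' p = id_blinfun"
proof -
  define DF where "DF i x = frechet_derivative (F i) (at x)" for i x
  have DF: "(F i has_derivative DF i x) (at x)" if "i < k" "x \<in> U" for i x
    unfolding DF_def using smooth_on_has_derivative smooth that by blast
  have linear_DF: "linear (DF i x)" if "i < k" "x \<in> U" for i x
    using has_derivative_linear[OF DF[OF that]] .
  define L where "L x y = y + (\<Sum>i<k. (DF i x y - DF i p y) *\<^sub>R w i)" for x y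
  have "bounded_linear (L x)" if "x \<in> U" for x
    unfolding L_def using linear_DF that U(2)
    by (intro bounded_linear_add bounded_linear_ident bounded_linear_sum
        bounded_linear_scaleR_const bounded_linear_sub) (auto simp: linear_conv_bounded_linear)
  then have L: "blinfun_apply (Blinfun (L x)) = L x" if "x \<in> U" for x
    using that by (simp add: bounded_linear_Blinfun_apply)
  show ?thesis
  proof
    fix x assume x: "x \<in> U"
    have diff_p: "((\<lambda>y. y - p) has_derivative (\<lambda>y. y)) (at x)"
      using has_derivative_diff[OF has_derivative_ident has_derivative_const] by simp
    have "((\<lambda>y. (F i y - DF i p (y - p)) *\<^sub>R w i) has_derivative
        (\<lambda>h. (DF i x h - DF i p h) *\<^sub>R w i)) (at x)" if "i \<in> {..<k}" for i
    proof -
      have "bounded_linear (DF i p)"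
        using linear_DF[OF _ U(2)] that by (simp add: linear_conv_bounded_linear)
      then show ?thesis
        using has_derivative_scaleR_left[OF has_derivative_diff[OF DF[OF _ x]
            bounded_linear.has_derivative[OF _ diff_p]]] that by simp
    qed
    then have "(\<Phi> has_derivative L x) (at x)"
      unfolding \<Phi>_def L_def DF_def[symmetric]
      by (rule has_derivative_add[OF diff_p has_derivative_sum])
    then show "(\<Phi> has_derivative blinfun_apply (Blinfun (L x))) (at x)"
      using L[OF x] by simp
  next
    show "continuous_on U (\<lambda>x. Blinfun (L x))"
    proof (rule continuous_on_blinfun_componentwise)
      fix b :: "real^'n" assume "b \<in> Basis"
      then obtain j where b: "b = axis j 1" by (auto simp: Basis_vec_def)
      have "continuous_on U (\<lambda>x. DF i x b)" if "i < k" for i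
        unfolding DF_def b using smooth_on_continuous_on smooth_on_partial_derivative smooth that
        by blast
      then have "continuous_on U (\<lambda>x. L x b)"
        unfolding L_def by (intro continuous_intros) auto
      then show "continuous_on U (\<lambda>x. blinfun_apply (Blinfun (L x)) b)"
        by (rule continuous_on_eq) (simp add: L)
    qed
  next
    show "Blinfun (L p) = id_blinfun"
      by (rule blinfun_eqI) (simp add: L[OF U(2)] L_def)
  qed
qed

lemma dual_family_exists:
  fixes L :: "nat \<Rightarrow> 'a \<Rightarrow> real"
  assumes "\<forall>c::nat \<Rightarrow> real. \<exists>v. \<forall>i<k. L i v = c i"
  obtains w where "\<And>i j. j < k \<Longrightarrow> L j (w i) = (if j = i then 1 else 0)"
proof -
  have "\<exists>u. \<forall>j<k. L j u = (if j = i then 1 else 0)" for i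
    using assms by (rule allE[of _ "\<lambda>j. if j = i then 1 else 0"])
  then show ?thesis
    using that choice[of "\<lambda>i u. \<forall>j<k. L j u = (if j = i then 1 else 0)"] by blast
qed

lemma ray_through_local_inverse:
  fixes g :: "'a::real_normed_vector \<Rightarrow> 'a"
  assumes "open V" "0 \<in> V" "(g has_derivative id) (at 0)"
  obtains e where "e > 0" "\<forall>t. \<bar>t\<bar> < e \<longrightarrow> t *\<^sub>R v \<in> V"
    "((\<lambda>t. g (t *\<^sub>R v)) has_vector_derivative v) (at 0)"
proof -
  have "open ((\<lambda>t. t *\<^sub>R v) -` V)"
    using assms(1) by (intro continuous_open_vimage) (auto intro: continuous_intros)
  moreover have "(0::real) \<in> (\<lambda>t. t *\<^sub>R v) -` V"
    using assms(2) by simp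
  ultimately obtain e where e: "e > 0" "ball 0 e \<subseteq> (\<lambda>t. t *\<^sub>R v) -` V"
    by (rule openE)
  have "(g has_derivative id) (at ((\<lambda>t. t *\<^sub>R v) 0))"
    using assms(3) by simp
  with bounded_linear_imp_has_derivative[OF bounded_linear_scaleR_left]
  have "(g \<circ> (\<lambda>t. t *\<^sub>R v) has_derivative id \<circ> (\<lambda>t. t *\<^sub>R v)) (at 0)"
    by (rule diff_chain_at)
  then have "((\<lambda>t. g (t *\<^sub>R v)) has_vector_derivative v) (at 0)"
    unfolding has_vector_derivative_def by (simp add: comp_def)
  moreover have "\<forall>t. \<bar>t\<bar> < e \<longrightarrow> t *\<^sub>R v \<in> V"
    using e(2) by (auto simp: dist_real_def)
  ultimately show ?thesis
    using that e(1) by blast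
qed

text \<open>Via the inverse function theorem for the straightening map \<open>\<Phi>\<close>, whose derivative at
  \<open>p\<close> is the identity and which satisfies \<open>DF\<^sub>j p (\<Phi> x) = F\<^sub>j x\<close>, the curve
  \<open>t \<mapsto> \<Phi>\<inverse> (t v)\<close> stays in the zero set as long as \<open>v\<close> lies in every kernel.\<close>
lemma kernel_subset_tangent_space:
  fixes S :: "(real^'n::finite) set" and F :: "nat \<Rightarrow> real^'n \<Rightarrow> real"
  assumes U: "open U" "p \<in> U" and smooth: "\<forall>i<k. smooth_on U (F i)"
    and surj: "\<forall>c::nat \<Rightarrow> real. \<exists>v. \<forall>i<k. frechet_derivative (F i) (at p) v = c i"
    and S: "S \<inter> U = {x\<in>U. \<forall>i<k. F i x = 0}" and "p \<in> S"
    and v: "\<forall>i<k. frechet_derivative (F i) (at p) v = 0"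
  shows "v \<in> tangent_space S p"
proof -
  define DF where "DF i = frechet_derivative (F i) (at p)" for i
  have linear_DF: "linear (DF i)" if "i < k" for i
    unfolding DF_def using has_derivative_linear smooth_on_has_derivative smooth that U(2) by blast
  obtain w where w: "\<And>i j. j < k \<Longrightarrow> DF j (w i) = (if j = i then 1 else 0)"
    using dual_family_exists[of k DF] surj unfolding DF_def by blast
  define \<Phi> where "\<Phi> x = (x - p) + (\<Sum>i<k. (F i x - DF i (x - p)) *\<^sub>R w i)" for x
  have DF_\<Phi>: "DF j (\<Phi> x) = F j x" if "j < k" for j x
  proof -
    have "DF j (\<Phi> x) = DF j (x - p) + (\<Sum>i<k. (F i x - DF i (x - p)) * DF j (w i))"
      unfolding \<Phi>_def using linear_DF[OF that] by (simp add: linear_add linear_sum linear_scale)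
    also have "\<dots> = F j x"
      using that by (simp add: w if_distrib cong: if_cong)
    finally show ?thesis .
  qed
  have F_p: "F i p = 0" if "i < k" for i
    using S \<open>p \<in> S\<close> U(2) that by blast
  have \<Phi>_p: "\<Phi> p = 0"
    unfolding \<Phi>_def using F_p linear_DF by (simp add: linear_0)
  obtain f' where f': "\<And>x. x \<in> U \<Longrightarrow> (\<Phi> has_derivative blinfun_apply (f' x)) (at x)"
    "continuous_on U f'" "f' p = id_blinfun"
    using straightening_map_derivative[OF U smooth, of w] unfolding \<Phi>_def DF_def by blast
  obtain V g where V: "open V" "\<Phi> p \<in> V"
    and g: "\<forall>y\<in>V. g y \<in> U \<and> \<Phi> (g y) = y"
    and g_0: "g (\<Phi> p) = p" and g': "(g has_derivative id) (at (\<Phi> p))"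
    by (rule local_right_inverse[OF U f'])
  obtain e where e: "e > 0" "\<forall>t. \<bar>t\<bar> < e \<longrightarrow> t *\<^sub>R v \<in> V"
    and \<gamma>': "((\<lambda>t. g (t *\<^sub>R v)) has_vector_derivative v) (at 0)"
    using ray_through_local_inverse[of V g v] V g' \<Phi>_p by auto
  define \<gamma> where "\<gamma> t = g (t *\<^sub>R v)" for t
  have "\<gamma> t \<in> S" if "\<bar>t\<bar> < e" for t
  proof -
    have tv: "t *\<^sub>R v \<in> V"
      using e(2) that by blast
    have "F j (\<gamma> t) = 0" if "j < k" for j
      using DF_\<Phi>[OF that, of "\<gamma> t"] g tv linear_DF[OF that] v that
      unfolding \<gamma>_def DF_def by (simp add: linear_scale)
    then show ?thesis
      using g tv S unfolding \<gamma>_def by blast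
  qed
  moreover have "(\<gamma> has_vector_derivative v) (at 0)"
    using \<gamma>' unfolding \<gamma>_def .
  moreover have "\<gamma> 0 = p"
    using g_0 \<Phi>_p unfolding \<gamma>_def by simp
  ultimately show ?thesis
    unfolding tangent_space_def using e(1) by blast
qed

lemma tangent_space_subspace:
  fixes S :: "(real^'n::finite) set"
  assumes "submanifold S" "p \<in> S"
  shows "subspace (tangent_space S p)"
proof -
  obtain U k and F :: "nat \<Rightarrow> real^'n \<Rightarrow> real" where U: "open U" "p \<in> U"
    and smooth: "\<forall>i<k. smooth_on U (F i)"
    and surj: "\<forall>x\<in>S \<inter> U. \<forall>c :: nat \<Rightarrow> real. \<exists>v. \<forall>i<k. frechet_derivative (F i) (at x) v = c i"
    and S: "S \<inter> U = {x\<in>U. \<forall>i<k. F i x = 0}"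
    using assms(1)[unfolded submanifold_def, rule_format, OF assms(2)] by blast
  have "tangent_space S p = {v. \<forall>i<k. frechet_derivative (F i) (at p) v = 0}"
  proof (intro equalityI subsetI CollectI allI impI)
    fix v i assume v: "v \<in> tangent_space S p" and "i < k"
    then show "frechet_derivative (F i) (at p) v = 0"
      using S smooth_on_differentiable[of U "F i" p] smooth U(2)
      by (intro tangent_space_subset_kernel[OF U _ _ v]) auto
  next
    fix v assume "v \<in> {v. \<forall>i<k. frechet_derivative (F i) (at p) v = 0}"
    then show "v \<in> tangent_space S p"
      using kernel_subset_tangent_space[OF U smooth _ S assms(2)] surj assms(2) U(2) by simp
  qed
  moreover have "linear (frechet_derivative (F i) (at p))" if "i < k" for i
    using has_derivative_linear smooth_on_has_derivative smooth that U(2) by blast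
  ultimately show ?thesis
    unfolding subspace_def by (auto simp: linear_0 linear_add linear_scale)
qed

section \<open>Riesz representation for the Fisher metric\<close>

lemma fisher_self_eq_0:
  assumes "\<forall>w. 0 < p$w" "fisher p X X = 0"
  shows "X = 0"
proof -
  have "0 \<le> X$w * X$w / p$w" for w
    using assms(1)[rule_format, of w] by simp
  then have "X$w * X$w / p$w = 0" for w
    using assms(2) unfolding fisher_def by (simp add: sum_nonneg_eq_0_iff)
  then show ?thesis
    using assms(1) by (simp add: vec_eq_iff) (metis less_irrefl)
qed

lemma riesz_eqI:
  assumes T: "subspace T" and p: "\<forall>w. 0 < p$w"
    and v: "v \<in> T" "\<forall>X\<in>T. fisher p v X = \<alpha> X"
  shows "riesz p T \<alpha> = v"
  unfolding riesz_def
proof (rule the_equality)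
  show "v \<in> T \<and> (\<forall>X\<in>T. fisher p v X = \<alpha> X)"
    using v by simp
next
  fix u assume u: "u \<in> T \<and> (\<forall>X\<in>T. fisher p u X = \<alpha> X)"
  then have "fisher p (u - v) (u - v) = 0"
    using v T by (simp add: fisher_diff_left subspace_diff)
  then have "u - v = 0"
    by (rule fisher_self_eq_0[OF p])
  then show "u = v" by simp
qed

lemma additive_homogeneous_on_sum:
  assumes "subspace T" "finite A" "A \<subseteq> T"
    and add: "\<forall>X\<in>T. \<forall>Y\<in>T. \<beta> (X + Y) = \<beta> X + \<beta> Y"
    and scale: "\<forall>c. \<forall>X\<in>T. \<beta> (c *\<^sub>R X) = c * \<beta> X"
  shows "\<beta> (\<Sum>a\<in>A. c a *\<^sub>R a) = (\<Sum>a\<in>A. c a * \<beta> a)"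
  using assms(2,3)
proof (induction A rule: finite_induct)
  case empty
  have "\<beta> 0 = 0"
    using scale subspace_0[OF assms(1)] by (metis mult_zero_left scaleR_zero_left)
  then show ?case by simp
next
  case (insert x F)
  have "(\<Sum>a\<in>F. c a *\<^sub>R a) \<in> T"
    using insert assms(1) by (intro subspace_sum subspace_scale) auto
  then show ?case
    using insert add scale assms(1) by (simp add: subspace_scale)
qed

lemma inner_representation_on_subspace:
  fixes T :: "'a::euclidean_space set"
  assumes "subspace T"
    and add: "\<forall>X\<in>T. \<forall>Y\<in>T. \<beta> (X + Y) = \<beta> X + \<beta> Y"
    and scale: "\<forall>c. \<forall>X\<in>T. \<beta> (c *\<^sub>R X) = c * \<beta> X"
  shows "\<exists>u\<in>T. \<forall>y\<in>T. u \<bullet> y = \<beta> y"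
proof -
  obtain B where B: "B \<subseteq> T" "pairwise orthogonal B" "\<And>x. x \<in> B \<Longrightarrow> norm x = 1"
    "independent B" "span B = T"
    using orthonormal_basis_subspace[OF assms(1)] by metis
  have "finite B"
    using B(4) independent_imp_finite by blast
  define u where "u = (\<Sum>b\<in>B. \<beta> b *\<^sub>R b)"
  have "u \<in> T"
    unfolding u_def using B(1) assms(1) by (intro subspace_sum subspace_scale) auto
  moreover have "u \<bullet> y = \<beta> y" if y: "y \<in> T" for y
  proof -
    have "y = (\<Sum>b\<in>B. (y \<bullet> b) *\<^sub>R b)"
      using orthonormal_basis_expand[OF B(2,3) _ \<open>finite B\<close>] y B(5) by simp
    then have "\<beta> y = (\<Sum>b\<in>B. (y \<bullet> b) * \<beta> b)"
      using additive_homogeneous_on_sum[OF assms(1) \<open>finite B\<close> B(1) add scale] by metis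
    also have "\<dots> = u \<bullet> y"
      unfolding u_def by (simp add: inner_sum_right inner_commute mult.commute)
    finally show ?thesis by simp
  qed
  ultimately show ?thesis by blast
qed

text \<open>Rescaling coordinates by \<open>1 / sqrt (p$w)\<close> is an isometry from the Fisher metric at
  \<open>p\<close> to the standard inner product.\<close>
lemma riesz_exists:
  fixes T :: "(real^'n::finite) set"
  assumes T: "subspace T" and p: "\<forall>w. 0 < p$w" and \<alpha>: "\<alpha> \<in> cotangent T"
  shows "\<exists>v\<in>T. \<forall>X\<in>T. fisher p v X = \<alpha> X"
proof -
  define D :: "real^'n \<Rightarrow> real^'n" where "D x = (\<chi> w. x$w / sqrt (p$w))" for x
  define E :: "real^'n \<Rightarrow> real^'n" where "E x = (\<chi> w. x$w * sqrt (p$w))" for x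
  have sqrt_p: "sqrt (p$w) > 0" for w
    using p by simp
  have ED: "E (D x) = x" and DE: "D (E x) = x" for x
    using sqrt_p unfolding D_def E_def by (simp_all add: vec_eq_iff less_imp_neq[symmetric])
  have "linear D"
    unfolding D_def by (rule linearI) (simp_all add: vec_eq_iff add_divide_distrib)
  have "linear E"
    unfolding E_def by (rule linearI) (simp_all add: vec_eq_iff algebra_simps)
  have fisher_D: "fisher p X Y = D X \<bullet> D Y" for X Y
    unfolding fisher_def D_def inner_vec_def
  proof (intro sum.cong refl)
    fix w
    have "sqrt (p$w) * sqrt (p$w) = p$w"
      using p by (simp add: less_imp_le)
    then show "X$w * Y$w / p$w = (\<chi> w. X$w / sqrt (p$w))$w \<bullet> (\<chi> w. Y$w / sqrt (p$w))$w"
      by simp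
  qed
  have "subspace (D ` T)"
    using linear_subspace_image[OF \<open>linear D\<close> T] .
  moreover have E_T: "E y \<in> T" if "y \<in> D ` T" for y
    using that ED by auto
  moreover have "\<forall>X\<in>T. \<forall>Y\<in>T. \<alpha> (X + Y) = \<alpha> X + \<alpha> Y" "\<forall>c. \<forall>X\<in>T. \<alpha> (c *\<^sub>R X) = c * \<alpha> X"
    using \<alpha> unfolding cotangent_def by auto
  ultimately obtain u where u: "u \<in> D ` T" "\<forall>y\<in>D ` T. u \<bullet> y = \<alpha> (E y)"
    using inner_representation_on_subspace[of "D ` T" "\<lambda>y. \<alpha> (E y)"]
    by (auto simp: linear_add[OF \<open>linear E\<close>] linear_scale[OF \<open>linear E\<close>])
  have "\<forall>X\<in>T. fisher p (E u) X = \<alpha> X"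
    using u(2) fisher_D DE ED by auto
  then show ?thesis
    using E_T u(1) by blast
qed

lemma riesz_represents:
  assumes "subspace T" "\<forall>w. 0 < p$w" "\<alpha> \<in> cotangent T"
  shows "riesz p T \<alpha> \<in> T" "\<forall>X\<in>T. fisher p (riesz p T \<alpha>) X = \<alpha> X"
  using riesz_exists[OF assms] riesz_eqI[OF assms(1,2)] by metis+

section \<open>Adjoint maps and Fisher co-metrics\<close>

lemma fisher_co_pullback_adjoint:
  assumes TM: "subspace TM" and TN: "subspace TN"
    and p: "\<forall>w. 0 < p$w" and q: "\<forall>w. 0 < q$w"
    and A: "A ` TM \<subseteq> TN" and B: "B ` TN \<subseteq> TM"
    and adjoint: "\<forall>X\<in>TM. \<forall>Y\<in>TN. fisher p X (B Y) = fisher q (A X) Y"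
    and \<alpha>: "\<alpha> \<in> cotangent TM" and \<beta>: "\<beta> \<in> cotangent TN"
  shows "fisher_co p TM \<alpha> (pullback A TM \<beta>) = fisher_co q TN (pullback B TN \<alpha>) \<beta>"
proof -
  define a where "a = riesz p TM \<alpha>"
  define b where "b = riesz q TN \<beta>"
  have a: "a \<in> TM" "\<forall>X\<in>TM. fisher p a X = \<alpha> X"
    unfolding a_def using riesz_represents[OF TM p \<alpha>] by auto
  have b: "b \<in> TN" "\<forall>Y\<in>TN. fisher q b Y = \<beta> Y"
    unfolding b_def using riesz_represents[OF TN q \<beta>] by auto
  have "riesz p TM (pullback A TM \<beta>) = B b"
  proof (rule riesz_eqI[OF TM p])
    show "B b \<in> TM"
      using B b(1) by blast
    show "\<forall>X\<in>TM. fisher p (B b) X = pullback A TM \<beta> X"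
    proof
      fix X assume X: "X \<in> TM"
      have "fisher p (B b) X = fisher q (A X) b"
        using adjoint X b(1) by (metis fisher_commute)
      also have "\<dots> = \<beta> (A X)"
        using b(2) A X by (metis fisher_commute image_subset_iff)
      finally show "fisher p (B b) X = pullback A TM \<beta> X"
        using X unfolding pullback_def by simp
    qed
  qed
  moreover have "riesz q TN (pullback B TN \<alpha>) = A a"
  proof (rule riesz_eqI[OF TN q])
    show "A a \<in> TN"
      using A a(1) by blast
    show "\<forall>Y\<in>TN. fisher q (A a) Y = pullback B TN \<alpha> Y"
      using adjoint B a unfolding pullback_def by (auto simp: image_subset_iff)
  qed
  ultimately show ?thesis
    unfolding fisher_co_def a_def[symmetric] b_def[symmetric] using adjoint a(1) b(1) by simp
qed

lemma adjoint_left_inverse_orthogonal_projection: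
  assumes A: "A ` TM \<subseteq> TN" and B: "B ` TN \<subseteq> TM" and left_inverse: "\<forall>X\<in>TM. B (A X) = X"
    and adjoint: "\<forall>X\<in>TM. \<forall>Y\<in>TN. fisher p X (B Y) = fisher q (A X) Y"
    and Y: "Y \<in> TN"
  shows "A (B Y) \<in> A ` TM" "\<forall>Z\<in>A ` TM. fisher q (Y - A (B Y)) Z = 0"
proof -
  show "A (B Y) \<in> A ` TM"
    using B Y by blast
  have "fisher q (Y - A (B Y)) (A X) = 0" if X: "X \<in> TM" for X
  proof -
    have "fisher q (Y - A (B Y)) (A X) = fisher q (A X) Y - fisher q (A X) (A (B Y))"
      by (metis fisher_diff_left fisher_commute)
    also have "\<dots> = fisher p X (B Y) - fisher p X (B (A (B Y)))"
      using adjoint X Y A B by (simp add: image_subset_iff)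
    also have "\<dots> = 0"
      using left_inverse B Y by auto
    finally show ?thesis .
  qed
  then show "\<forall>Z\<in>A ` TM. fisher q (Y - A (B Y)) Z = 0"
    by blast
qed

theorem mainTheorem11:
  fixes M :: "(real^'a::finite) set" and N :: "(real^'b::finite) set"
    and W :: "'b \<Rightarrow> 'a \<Rightarrow> real" and V :: "'a \<Rightarrow> 'b \<Rightarrow> real"
    and p :: "real^'a" and q :: "real^'b"
  assumes "M \<subseteq> prob_simplex" and "submanifold M"
    and "N \<subseteq> prob_simplex" and "submanifold N"
    and "is_channel W" and "\<forall>x\<in>M. markov_map W x \<in> N"
    and "is_channel V" and "\<forall>y\<in>N. markov_map V y \<in> M"
    and "\<forall>x\<in>M. markov_map V (markov_map W x) = x"
    and "p \<in> M" and "q \<in> N" and "q = markov_map W p" and "p = markov_map V q"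
  shows "(\<forall>X\<in>tangent_space M p. \<forall>Y\<in>tangent_space N q.
            fisher p X (markov_map V Y) = fisher q (markov_map W X) Y)
       \<and> (\<forall>\<alpha>\<in>cotangent (tangent_space M p). \<forall>\<beta>\<in>cotangent (tangent_space N q).
            fisher_co p (tangent_space M p) \<alpha> (pullback (markov_map W) (tangent_space M p) \<beta>)
          = fisher_co q (tangent_space N q) (pullback (markov_map V) (tangent_space N q) \<alpha>) \<beta>)
       \<and> (\<forall>Y\<in>tangent_space N q.
            markov_map W (markov_map V Y) \<in> markov_map W ` tangent_space M p
          \<and> (\<forall>Z\<in>markov_map W ` tangent_space M p.
               fisher q (Y - markov_map W (markov_map V Y)) Z = 0))"
proof -
  let ?TM = "tangent_space M p" and ?TN = "tangent_space N q"
  have p_pos: "\<forall>w. 0 < p$w" and q_pos: "\<forall>w. 0 < q$w"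
    using assms(1,3,10,11) unfolding prob_simplex_def by blast+
  have TM: "subspace ?TM" and TN: "subspace ?TN"
    using tangent_space_subspace assms(2,4,10,11) by blast+
  have W_T: "markov_map W ` ?TM \<subseteq> ?TN"
    using tangent_space_linear_image[OF bounded_linear_markov_map, of W M N] assms(6,12) by blast
  have V_T: "markov_map V ` ?TN \<subseteq> ?TM"
    using tangent_space_linear_image[OF bounded_linear_markov_map, of V N M] assms(8,13) by blast
  have left_inverse: "\<forall>X\<in>?TM. markov_map V (markov_map W X) = X"
    using tangent_space_fixed_by_linear[OF bounded_linear_compose[OF
        bounded_linear_markov_map bounded_linear_markov_map]] assms(9) by blast
  have adjoint: "\<forall>X\<in>?TM. \<forall>Y\<in>?TN. fisher p X (markov_map V Y) = fisher q (markov_map W X) Y"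
    using fisher_adjoint_markov_maps[OF p_pos q_pos assms(5,7,12,13)] left_inverse by blast
  show ?thesis
    using adjoint fisher_co_pullback_adjoint[OF TM TN p_pos q_pos W_T V_T adjoint]
      adjoint_left_inverse_orthogonal_projection[OF W_T V_T left_inverse adjoint] by blast
qed

end
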